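(* Let $(X_n)_{n\ge1}$ be i.i.d. random variables in $S$ and $X^{(n)}=X_n\cdots X_1$. Then the condition $\mathbb P\bigl(\bigcup_{n\ge1}[X^{(n)}\in S^\circ]\bigr)>0$ is equivalent to $\mathbb P[T<+\infty]=1$. Moreover, for every $\omega$ with $T(\omega)<+\infty$: (i) $X^{(n)}(\omega)\in S^\circ$ for all $n\ge T(\omega)$; (ii) setting, for $n\ge1$, $D_n(\omega)=\sup\bigl\{\,\bigl|1_{[T\le n]}(\omega)\ln\langle y,X^{(n)}(\omega)x\rangle-\ln\|Y^{(n)}(\omega)y\|\bigr| : x,y\in\overline B\bigr\}$, one has $\sup_{n\ge1}D_n(\omega)<+\infty$; (iii) setting $\chi=\frac1q\vec{\mathbf 1}$ and $\widetilde D_n(\omega)=\bigl|\ln\Lambda_n(\omega)-\ln\|Y^{(n)}(\omega)\chi\|\bigr|$, one has $\sup_{n\ge1}\widetilde D_n(\omega)<+\infty$.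
   Context: $S$ is the semigroup of real $q\times q$ matrices with nonnegative entries such that every row and every column contains a strictly positive entry; $S^\circ$ the subset of matrices with all entries strictly positive. $\|x\|=\sum_i|x_i|$ on $\mathbb R^q$; $\overline C$ is the closed nonnegative orthant and $\overline B=\{x\in\overline C:\|x\|=1\}$; $\vec{\mathbf 1}$ is the vector with all entries $1$. $T=\inf\{n\ge1:X^{(n)}\in S^\circ\}$, and $1_{[T\le n]}\ln\langle y,X^{(n)}x\rangle$ is taken to be $0$ on $[T>n]$. $Y_n=X_n^*$ (transpose) and $Y^{(n)}=Y_1\cdots Y_n=(X^{(n)})^*$. $\Lambda_n$ is the spectral radius of $X^{(n)}$. *)

theory Defs
  imports "HOL-Probability.Probability"
begin

definition inS :: "real^'q^'q \<Rightarrow> bool" where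
  "inS A \<longleftrightarrow> (\<forall>i j. A $ i $ j \<ge> 0) \<and> (\<forall>i. \<exists>j. A $ i $ j > 0) \<and> (\<forall>j. \<exists>i. A $ i $ j > 0)"

definition inS_pos :: "real^'q^'q \<Rightarrow> bool" where
  "inS_pos A \<longleftrightarrow> inS A \<and> (\<forall>i j. A $ i $ j > 0)"

definition l1norm :: "real^'q \<Rightarrow> real" where
  "l1norm x = (\<Sum>i\<in>UNIV. \<bar>x $ i\<bar>)"

definition Bbar :: "(real^'q) set" where
  "Bbar = {x. (\<forall>i. x $ i \<ge> 0) \<and> l1norm x = 1}"

fun Xprod :: "(nat \<Rightarrow> 'a \<Rightarrow> real^'q^'q) \<Rightarrow> nat \<Rightarrow> 'a \<Rightarrow> real^'q^'q" where
  "Xprod X 0 \<omega> = mat 1"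
| "Xprod X (Suc n) \<omega> = X (Suc n) \<omega> ** Xprod X n \<omega>"

text \<open>Y^(n) = (X^(n))^* = Y_1 ... Y_n.\<close>
definition Yprod :: "(nat \<Rightarrow> 'a \<Rightarrow> real^'q^'q) \<Rightarrow> nat \<Rightarrow> 'a \<Rightarrow> real^'q^'q" where
  "Yprod X n \<omega> = transpose (Xprod X n \<omega>)"

definition hitT :: "(nat \<Rightarrow> 'a \<Rightarrow> real^'q^'q) \<Rightarrow> 'a \<Rightarrow> enat" where
  "hitT X \<omega> = (if \<exists>n\<ge>1. inS_pos (Xprod X n \<omega>)
                then enat (LEAST n. n \<ge> 1 \<and> inS_pos (Xprod X n \<omega>)) else \<infinity>)"

definition cmat :: "real^'q^'q \<Rightarrow> complex^'q^'q" where
  "cmat A = (\<chi> i j. complex_of_real (A $ i $ j))"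

definition spec_rad :: "real^'q^'q \<Rightarrow> real" where
  "spec_rad A = Max {cmod l | l. \<exists>v::complex^'q. v \<noteq> 0 \<and> cmat A *v v = l *s v}"

end

theory Submission
  imports Defs "HOL-Computational_Algebra.Polynomial"
begin

(*
  The proof separates deterministic estimates
  along a single trajectory from a zero-one argument for the hitting time T.

  Row-allowable matrices (no zero row) are closed under products, and a
  row-allowable matrix times a positive matrix is positive; so once X^(T) is positive every later
  product X^(n) = Q X^(T) is positive, which is (i).  If P has entries in [a, b] with a > 0, the
  vector (Q P)^T y is, entry by entry, comparable to one common scale for every row-allowable Q
  and every probability vector y.  This bounds ln <y, Q P x> - ln |(Q P)^T y| by ln (q b / a),
  and, with a Perron vector obtained from Brouwer's fixed point theorem, also the distance between
  ln rho(Q P) and ln |(Q P)^T chi|.  Applied with P = X^(T), and after absorbing the finitely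
  many indices n < T into the constant, this gives (ii) and (iii).

  If X^(N) is positive with probability p > 0, the products over the disjoint
  blocks of indices ]kN, kN + N] are independent copies of X^(N); a positive block forces a
  positive product, since the earlier factors are column-allowable.  Hence T is infinite with
  probability at most (1 - p)^m for every m, that is, with probability zero.
*)

definition row_allowable :: "real^'q^'q \<Rightarrow> bool" where
  "row_allowable A \<longleftrightarrow> (\<forall>i j. 0 \<le> A $ i $ j) \<and> (\<forall>i. \<exists>j. 0 < A $ i $ j)"

definition column_allowable :: "real^'q^'q \<Rightarrow> bool" where
  "column_allowable A \<longleftrightarrow> row_allowable (transpose A)"

definition positive_matrix :: "real^'q^'q \<Rightarrow> bool" where
  "positive_matrix A \<longleftrightarrow> (\<forall>i j. 0 < A $ i $ j)"

lemma inS_pos_iff_positive: "inS_pos A \<longleftrightarrow> positive_matrix A"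
  unfolding inS_pos_def inS_def positive_matrix_def by (auto intro: less_imp_le)

lemma inS_allowable:
  assumes "inS A" shows "row_allowable A" "column_allowable A"
  using assms unfolding inS_def row_allowable_def column_allowable_def transpose_def by auto

lemma positive_matrix_transpose: "positive_matrix (transpose A) \<longleftrightarrow> positive_matrix A"
  unfolding positive_matrix_def transpose_def by auto

lemma matrix_mult_entry_nonneg:
  fixes A B :: "real^'q^'q"
  assumes "\<And>i j. 0 \<le> A $ i $ j" "\<And>i j. 0 \<le> B $ i $ j"
  shows "0 \<le> (A ** B) $ i $ l"
  unfolding matrix_matrix_mult_def using assms by (auto intro!: sum_nonneg)

lemma matrix_mult_entry_pos:
  fixes A B :: "real^'q^'q"
  assumes "\<And>i j. 0 \<le> A $ i $ j" "\<And>i j. 0 \<le> B $ i $ j" "0 < A $ i $ k" "0 < B $ k $ l"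
  shows "0 < (A ** B) $ i $ l"
  unfolding matrix_matrix_mult_def using assms by (auto intro!: sum_pos2[where i=k])

lemma row_allowable_mat1: "row_allowable (mat 1)"
  unfolding row_allowable_def by (auto simp: mat_def)

lemma column_allowable_mat1: "column_allowable (mat 1)"
  by (simp add: column_allowable_def row_allowable_mat1)

lemma row_allowable_mult:
  assumes "row_allowable A" "row_allowable B" shows "row_allowable (A ** B)"
proof -
  have nonneg: "\<And>i j. 0 \<le> A $ i $ j" "\<And>i j. 0 \<le> B $ i $ j"
    using assms unfolding row_allowable_def by auto
  have "\<exists>l. 0 < (A ** B) $ i $ l" for i
  proof -
    obtain k where "0 < A $ i $ k" using assms(1) unfolding row_allowable_def by blast
    moreover obtain l where "0 < B $ k $ l" using assms(2) unfolding row_allowable_def by blast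
    ultimately show ?thesis using matrix_mult_entry_pos[OF nonneg] by blast
  qed
  then show ?thesis using matrix_mult_entry_nonneg[OF nonneg] unfolding row_allowable_def by blast
qed

lemma column_allowable_mult:
  "column_allowable A \<Longrightarrow> column_allowable B \<Longrightarrow> column_allowable (A ** B)"
  unfolding column_allowable_def matrix_transpose_mul by (simp add: row_allowable_mult)

lemma row_allowable_times_positive:
  assumes "row_allowable Q" "positive_matrix P" shows "positive_matrix (Q ** P)"
  unfolding positive_matrix_def
proof (intro allI)
  fix i l
  obtain k where "0 < Q $ i $ k" using assms(1) unfolding row_allowable_def by blast
  then show "0 < (Q ** P) $ i $ l"
    using assms by (intro matrix_mult_entry_pos[where k=k])
      (auto simp: row_allowable_def positive_matrix_def less_imp_le)
qed

lemma positive_times_column_allowable: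
  assumes "positive_matrix P" "column_allowable C" shows "positive_matrix (P ** C)"
  using row_allowable_times_positive[of "transpose C" "transpose P"] assms
  by (simp add: column_allowable_def positive_matrix_transpose flip: matrix_transpose_mul)

lemma positive_matrix_entry_bounds:
  assumes "positive_matrix (P :: real^'q^'q)"
  obtains a b where "0 < a" "\<And>i j. a \<le> P $ i $ j" "\<And>i j. P $ i $ j \<le> b"
proof
  let ?E = "range (\<lambda>(i, j). P $ i $ j)"
  show "\<And>i j. Min ?E \<le> P $ i $ j" "\<And>i j. P $ i $ j \<le> Max ?E"
    by (auto intro!: Min_le Max_ge)
  have "Min ?E \<in> ?E" by (rule Min_in) auto
  then show "0 < Min ?E" using assms unfolding positive_matrix_def by auto
qed

fun block_prod :: "(nat \<Rightarrow> real^'q^'q) \<Rightarrow> nat \<Rightarrow> nat \<Rightarrow> real^'q^'q" where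
  "block_prod f a 0 = mat 1"
| "block_prod f a (Suc d) = f (a + Suc d) ** block_prod f a d"

lemma Xprod_split: "Xprod X (a + d) \<omega> = block_prod (\<lambda>i. X i \<omega>) a d ** Xprod X a \<omega>"
  by (induction d) (simp_all add: matrix_mul_assoc)

lemma Xprod_eq_block_prod: "Xprod X n \<omega> = block_prod (\<lambda>i. X i \<omega>) 0 n"
  using Xprod_split[of X 0 n \<omega>] by simp

lemma block_prod_cong:
  "(\<And>i. a < i \<Longrightarrow> i \<le> a + d \<Longrightarrow> f i = g i) \<Longrightarrow> block_prod f a d = block_prod g a d"
  by (induction d) auto

lemma block_prod_shift: "block_prod f a d = block_prod (\<lambda>n. f (n + a)) 0 d"
  by (induction d) (auto simp: add.commute)

lemma block_prod_closed:
  assumes "Pr (mat 1)" "\<And>A B. Pr A \<Longrightarrow> Pr B \<Longrightarrow> Pr (A ** B)"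
    and "\<And>i. a < i \<Longrightarrow> i \<le> a + d \<Longrightarrow> Pr (f i)"
  shows "Pr (block_prod f a d)"
  using assms(3) by (induction d) (auto intro: assms(1,2))

lemma block_prod_allowable:
  assumes "\<And>n. 1 \<le> n \<Longrightarrow> inS (X n \<omega>)"
  shows "row_allowable (block_prod (\<lambda>i. X i \<omega>) a d)" "column_allowable (block_prod (\<lambda>i. X i \<omega>) a d)"
  by (rule block_prod_closed; simp add: assms inS_allowable row_allowable_mat1 row_allowable_mult
      column_allowable_mat1 column_allowable_mult)+

lemma Bbar_nonneg: "x \<in> Bbar \<Longrightarrow> 0 \<le> x $ i"
  unfolding Bbar_def by auto

lemma l1norm_nonneg_eq: "(\<And>i. 0 \<le> x $ i) \<Longrightarrow> l1norm x = (\<Sum>i\<in>UNIV. x $ i)"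
  unfolding l1norm_def by simp

lemma Bbar_sum: "x \<in> Bbar \<Longrightarrow> (\<Sum>i\<in>UNIV. x $ i) = 1"
  unfolding Bbar_def l1norm_def by auto

lemma Bbar_has_pos:
  assumes "x \<in> Bbar" obtains i where "0 < x $ i"
proof -
  obtain i where "x $ i \<noteq> 0" using Bbar_sum[OF assms] by (metis sum.neutral zero_neq_one)
  then show ?thesis using that Bbar_nonneg[OF assms, of i] by (simp add: order_less_le)
qed

lemma uniform_in_Bbar: "(\<chi> i. 1 / real CARD('q)) \<in> (Bbar :: (real^'q) set)"
  unfolding Bbar_def l1norm_def by auto

lemma inner_Bbar_ge:
  assumes x: "x \<in> Bbar" and lo: "\<And>j. c \<le> v $ j"
  shows "c \<le> v \<bullet> x"
proof -
  have "c = (\<Sum>j\<in>UNIV. c * x $ j)" by (simp add: Bbar_sum[OF x] flip: sum_distrib_left)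
  also have "\<dots> \<le> (\<Sum>j\<in>UNIV. v $ j * x $ j)" by (intro sum_mono mult_right_mono lo Bbar_nonneg[OF x])
  finally show ?thesis by (simp add: inner_vec_def)
qed

lemma inner_Bbar_le:
  assumes x: "x \<in> Bbar" and hi: "\<And>j. v $ j \<le> d"
  shows "v \<bullet> x \<le> d"
proof -
  have "(\<Sum>j\<in>UNIV. v $ j * x $ j) \<le> (\<Sum>j\<in>UNIV. d * x $ j)"
    by (intro sum_mono mult_right_mono hi Bbar_nonneg[OF x])
  also have "\<dots> = d" by (simp add: Bbar_sum[OF x] flip: sum_distrib_left)
  finally show ?thesis by (simp add: inner_vec_def)
qed

lemma l1norm_bounds:
  fixes v :: "real^'q"
  assumes "0 \<le> c" and lo: "\<And>j. c \<le> v $ j" and hi: "\<And>j. v $ j \<le> d"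
  shows "real CARD('q) * c \<le> l1norm v" "l1norm v \<le> real CARD('q) * d"
proof -
  have eq: "l1norm v = (\<Sum>j\<in>UNIV. v $ j)" using assms by (intro l1norm_nonneg_eq) (metis order_trans)
  show "real CARD('q) * c \<le> l1norm v" unfolding eq using sum_mono[of UNIV "\<lambda>_. c", OF lo] by simp
  show "l1norm v \<le> real CARD('q) * d" unfolding eq using sum_mono[of UNIV _ "\<lambda>_. d", OF hi] by simp
qed

lemma transpose_product_comparable:
  fixes Q P :: "real^'q^'q"
  assumes Q: "row_allowable Q" and Pa: "\<And>i j. a \<le> P $ i $ j" and Pb: "\<And>i j. P $ i $ j \<le> b"
    and y: "y \<in> Bbar"
  obtains s where "0 < s" "\<And>j. a * s \<le> (transpose (Q ** P) *v y) $ j"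
    "\<And>j. (transpose (Q ** P) *v y) $ j \<le> b * s"
proof -
  define w where "w = transpose Q *v y"
  define s where "s = (\<Sum>k\<in>UNIV. w $ k)"
  have Q_nonneg: "0 \<le> Q $ i $ j" for i j using Q unfolding row_allowable_def by auto
  have w_eq: "w $ k = (\<Sum>i\<in>UNIV. Q $ i $ k * y $ i)" for k
    by (simp add: w_def matrix_vector_mult_def transpose_def mult.commute)
  have w_nonneg: "0 \<le> w $ k" for k
    unfolding w_eq using Q_nonneg Bbar_nonneg[OF y] by (intro sum_nonneg) simp
  have "0 < s"
  proof -
    obtain i where i: "0 < y $ i" using Bbar_has_pos[OF y] .
    obtain k where k: "0 < Q $ i $ k" using Q unfolding row_allowable_def by blast
    have "0 < w $ k" unfolding w_eq
      using i k Q_nonneg Bbar_nonneg[OF y] by (intro sum_pos2[where i=i]) auto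
    then show ?thesis unfolding s_def using w_nonneg by (intro sum_pos2[where i=k]) auto
  qed
  moreover have entry: "(transpose (Q ** P) *v y) $ j = (\<Sum>k\<in>UNIV. P $ k $ j * w $ k)" for j
  proof -
    have "transpose (Q ** P) *v y = transpose P *v w"
      by (simp only: w_def matrix_transpose_mul matrix_vector_mul_assoc)
    then show ?thesis by (simp add: matrix_vector_mult_def transpose_def)
  qed
  moreover have "a * s \<le> (transpose (Q ** P) *v y) $ j" for j
    unfolding entry s_def sum_distrib_left by (intro sum_mono mult_right_mono Pa w_nonneg)
  moreover have "(transpose (Q ** P) *v y) $ j \<le> b * s" for j
    unfolding entry s_def sum_distrib_left by (intro sum_mono mult_right_mono Pb w_nonneg)
  ultimately show ?thesis using that by blast
qed

lemma abs_ln_diff_le: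
  fixes u L K :: real
  assumes "0 < u" "0 < L" "u \<le> K * L" "L \<le> K * u"
  shows "\<bar>ln u - ln L\<bar> \<le> ln K"
proof -
  have K: "0 < K" using assms by (smt (verit, best) mult_nonpos_nonneg)
  have "ln u \<le> ln (K * L)" "ln L \<le> ln (K * u)" using assms K by simp_all
  then have "ln u \<le> ln K + ln L" "ln L \<le> ln K + ln u" using assms K by (simp_all add: ln_mult)
  then show ?thesis by linarith
qed

lemma bilinear_log_bound:
  fixes Q P :: "real^'q^'q"
  assumes Q: "row_allowable Q" and a: "0 < a"
    and Pa: "\<And>i j. a \<le> P $ i $ j" and Pb: "\<And>i j. P $ i $ j \<le> b"
    and x: "x \<in> Bbar" and y: "y \<in> Bbar"
  shows "\<bar>ln (y \<bullet> ((Q ** P) *v x)) - ln (l1norm (transpose (Q ** P) *v y))\<bar>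
           \<le> ln (real CARD('q) * b / a)"
proof -
  define q where "q = real CARD('q)"
  define v where "v = transpose (Q ** P) *v y"
  obtain s where s: "0 < s" and lo: "\<And>j. a * s \<le> v $ j" and hi: "\<And>j. v $ j \<le> b * s"
    using transpose_product_comparable[OF Q Pa Pb y] unfolding v_def by blast
  have q: "1 \<le> q" unfolding q_def by simp
  have ab: "a \<le> b" using Pa Pb order_trans by blast
  define K where "K = q * b / a"
  have K: "0 \<le> K" using a ab q unfolding K_def by simp
  have as: "0 < a * s" using a s by simp
  have u: "a * s \<le> v \<bullet> x" "v \<bullet> x \<le> b * s" using inner_Bbar_ge[OF x lo] inner_Bbar_le[OF x hi] by auto
  have L: "q * (a * s) \<le> l1norm v" "l1norm v \<le> q * (b * s)"
    using l1norm_bounds[OF _ lo hi] as unfolding q_def by auto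
  have "\<bar>ln (v \<bullet> x) - ln (l1norm v)\<bar> \<le> ln K"
  proof (rule abs_ln_diff_le)
    have "0 < q * (a * s)" using as q by simp
    then show "0 < v \<bullet> x" "0 < l1norm v" using u L as by linarith+
    have "1 * 1 \<le> q * q" using q by (intro mult_mono) auto
    moreover have "0 \<le> b * s" using a ab s by simp
    ultimately have "b * s \<le> q * q * (b * s)" using mult_right_mono[of 1 "q * q" "b * s"] by simp
    also have "\<dots> = K * (q * (a * s))" using a unfolding K_def by (simp add: field_simps)
    also have "\<dots> \<le> K * l1norm v" using L K by (intro mult_left_mono) auto
    finally show "v \<bullet> x \<le> K * l1norm v" using u by linarith
    have "q * (b * s) = K * (a * s)" using a unfolding K_def by simp
    also have "\<dots> \<le> K * (v \<bullet> x)" using u K by (intro mult_left_mono) auto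
    finally show "l1norm v \<le> K * (v \<bullet> x)" using L by linarith
  qed
  moreover have "y \<bullet> ((Q ** P) *v x) = v \<bullet> x" by (simp add: v_def dot_lmul_matrix)
  ultimately show ?thesis unfolding K_def q_def v_def by simp
qed

text \<open>The row-sum bounds of an arbitrary row-allowable matrix give a (non-uniform) bound for the
  finitely many products before the hitting time.\<close>
lemma row_allowable_log_bound:
  fixes A :: "real^'q^'q"
  assumes A: "row_allowable A"
  shows "\<exists>c. \<forall>y\<in>Bbar. \<bar>ln (l1norm (transpose A *v y))\<bar> \<le> c"
proof -
  define r where "r = A *v (\<chi> j. 1)"
  define m where "m = Min (range (\<lambda>i. r $ i))"
  define M where "M = Max (range (\<lambda>i. r $ i))"
  have A_nonneg: "0 \<le> A $ i $ j" for i j using A unfolding row_allowable_def by auto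
  have r_pos: "0 < r $ i" for i
  proof -
    obtain j where "0 < A $ i $ j" using A unfolding row_allowable_def by blast
    then show ?thesis unfolding r_def matrix_vector_mult_def
      using A_nonneg by (auto intro!: sum_pos2[where i=j])
  qed
  have "m \<in> range (\<lambda>i. r $ i)" unfolding m_def by (rule Min_in) auto
  then have m: "0 < m" using r_pos by auto
  have "\<bar>ln (l1norm (transpose A *v y))\<bar> \<le> \<bar>ln m\<bar> + \<bar>ln M\<bar>" if y: "y \<in> Bbar" for y
  proof -
    have nonneg: "0 \<le> (transpose A *v y) $ j" for j
      using A_nonneg Bbar_nonneg[OF y]
      by (simp add: matrix_vector_mult_def transpose_def sum_nonneg)
    have "l1norm (transpose A *v y) = (transpose A *v y) \<bullet> (\<chi> j. 1)"
      unfolding l1norm_nonneg_eq[OF nonneg] by (simp add: inner_vec_def)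
    also have "\<dots> = y \<bullet> r" unfolding r_def transpose_matrix_vector by (rule dot_lmul_matrix)
    also have "\<dots> = r \<bullet> y" by (rule inner_commute)
    finally have eq: "l1norm (transpose A *v y) = r \<bullet> y" .
    have "m \<le> r \<bullet> y" "r \<bullet> y \<le> M"
      using inner_Bbar_ge[OF y, of m r] inner_Bbar_le[OF y, of r M] unfolding m_def M_def by auto
    then have "ln m \<le> ln (r \<bullet> y)" "ln (r \<bullet> y) \<le> ln M" using m by simp_all
    then show ?thesis unfolding eq using abs_ge_self[of "ln m"] abs_ge_self[of "ln M"]
      abs_ge_minus_self[of "ln m"] abs_ge_minus_self[of "ln M"] by linarith
  qed
  then show ?thesis by blast
qed

text \<open>The simplex is a compact convex set, so Brouwer's fixed point theorem applies to it.\<close>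
lemma continuous_on_l1norm: "continuous_on S (l1norm :: real^'q \<Rightarrow> real)"
  unfolding l1norm_def[abs_def]
  by (intro continuous_intros bounded_linear.continuous_on[OF bounded_linear_vec_nth])

lemma compact_Bbar: "compact (Bbar :: (real^'q) set)"
  unfolding compact_eq_bounded_closed
proof
  show "bounded (Bbar :: (real^'q) set)"
    unfolding bounded_iff
  proof (intro exI ballI)
    fix x :: "real^'q" assume "x \<in> Bbar"
    then show "norm x \<le> 1" using norm_le_l1_cart[of x] unfolding Bbar_def l1norm_def by auto
  qed
  have "Bbar = (\<Inter>i. {x::real^'q. 0 \<le> x $ i}) \<inter> {x. l1norm x = 1}" unfolding Bbar_def by auto
  moreover have "closed {x::real^'q. 0 \<le> x $ i}" for i
    by (intro closed_Collect_le continuous_intros)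
  moreover have "closed {x::real^'q. l1norm x = 1}"
    by (intro closed_Collect_eq continuous_on_l1norm continuous_intros)
  ultimately show "closed (Bbar :: (real^'q) set)" by (metis closed_INT closed_Int)
qed

lemma convex_Bbar: "convex (Bbar :: (real^'q) set)"
  unfolding convex_def
proof (intro ballI allI impI)
  fix x y :: "real^'q" and u v :: real
  assume x: "x \<in> Bbar" and y: "y \<in> Bbar" and uv: "0 \<le> u" "0 \<le> v" "u + v = 1"
  have nonneg: "\<forall>i. 0 \<le> (u *\<^sub>R x + v *\<^sub>R y) $ i" using x y uv unfolding Bbar_def by auto
  have "l1norm (u *\<^sub>R x + v *\<^sub>R y) = u * (\<Sum>i\<in>UNIV. x $ i) + v * (\<Sum>i\<in>UNIV. y $ i)"
    using nonneg by (simp add: l1norm_nonneg_eq sum.distrib sum_distrib_left)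
  then show "u *\<^sub>R x + v *\<^sub>R y \<in> Bbar" using nonneg Bbar_sum[OF x] Bbar_sum[OF y] uv
    unfolding Bbar_def by auto
qed

lemma positive_mult_Bbar_pos:
  assumes A: "positive_matrix A" and x: "x \<in> Bbar" shows "0 < (A *v x) $ i"
proof -
  obtain j where "0 < x $ j" using Bbar_has_pos[OF x] .
  then show ?thesis unfolding matrix_vector_mult_def
    using A Bbar_nonneg[OF x] by (auto simp: positive_matrix_def less_imp_le intro!: sum_pos2[where i=j])
qed

text \<open>Perron's theorem in the weak form needed here: a positive matrix has an eigenvector in the
  simplex, obtained as a fixed point of the normalised map via Brouwer's theorem.\<close>
lemma perron_vector:
  assumes A: "positive_matrix (A :: real^'q^'q)"
  obtains x where "x \<in> Bbar" "A *v x = l1norm (A *v x) *\<^sub>R x" "0 < l1norm (A *v x)"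
proof -
  have sum_eq: "l1norm (A *v x) = (\<Sum>i\<in>UNIV. (A *v x) $ i)" if "x \<in> Bbar" for x
    using positive_mult_Bbar_pos[OF A that] by (intro l1norm_nonneg_eq less_imp_le)
  have L_pos: "0 < l1norm (A *v x)" if "x \<in> Bbar" for x
    unfolding sum_eq[OF that] using positive_mult_Bbar_pos[OF A that] by (intro sum_pos) auto
  define f where "f x = (1 / l1norm (A *v x)) *\<^sub>R (A *v x)" for x :: "real^'q"
  have "continuous_on Bbar f"
    unfolding f_def
    by (intro continuous_intros continuous_on_divide continuous_on_compose2[OF continuous_on_l1norm])
      (auto dest: L_pos)
  moreover have "f \<in> Bbar \<rightarrow> Bbar"
  proof
    fix x :: "real^'q" assume x: "x \<in> Bbar"
    have "\<forall>i. 0 \<le> f x $ i" unfolding f_def using positive_mult_Bbar_pos[OF A x] L_pos[OF x]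
      by (auto intro: less_imp_le)
    moreover have "l1norm (f x) = (1 / l1norm (A *v x)) * (\<Sum>i\<in>UNIV. (A *v x) $ i)"
      using calculation by (simp add: l1norm_nonneg_eq f_def sum_distrib_left)
    ultimately show "f x \<in> Bbar" using L_pos[OF x] unfolding Bbar_def sum_eq[OF x, symmetric] by auto
  qed
  ultimately obtain x where x: "x \<in> Bbar" "f x = x"
    using brouwer[OF compact_Bbar convex_Bbar] uniform_in_Bbar by blast
  have "A *v x = l1norm (A *v x) *\<^sub>R f x" unfolding f_def using L_pos[OF x(1)] by simp
  then have "A *v x = l1norm (A *v x) *\<^sub>R x" using x(2) by simp
  with x L_pos show ?thesis using that by blast
qed

text \<open>The sum of all entries; it dominates the spectral radius of a nonnegative matrix.\<close>
definition matrix_total :: "real^'q^'q \<Rightarrow> real" where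
  "matrix_total A = (\<Sum>i\<in>UNIV. \<Sum>j\<in>UNIV. A $ i $ j)"

text \<open>Every complex eigenvalue of a nonnegative matrix is bounded by matrix_total A (evaluate
  the eigenvalue equation at a coordinate of maximal modulus).\<close>
lemma eigenvalue_le_matrix_total:
  fixes A :: "real^'q^'q"
  assumes nonneg: "\<And>i j. 0 \<le> A $ i $ j" and v: "v \<noteq> 0" and ev: "cmat A *v v = l *s v"
  shows "cmod l \<le> matrix_total A"
proof -
  define m where "m = Max (range (\<lambda>j. cmod (v $ j)))"
  have m_ge: "cmod (v $ j) \<le> m" for j unfolding m_def by simp
  have "m \<in> range (\<lambda>j. cmod (v $ j))" unfolding m_def by (rule Max_in) auto
  then obtain i where i: "cmod (v $ i) = m" by auto
  obtain j0 where "v $ j0 \<noteq> 0" using v by (metis vec_eq_iff zero_index)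
  then have m: "0 < m" using m_ge[of j0] by (meson less_le_trans zero_less_norm_iff)
  have "cmod l * m = cmod ((cmat A *v v) $ i)" using ev by (simp add: norm_mult i)
  also have "\<dots> = cmod (\<Sum>j\<in>UNIV. complex_of_real (A $ i $ j) * v $ j)"
    by (simp add: matrix_vector_mult_def cmat_def)
  also have "\<dots> \<le> (\<Sum>j\<in>UNIV. cmod (complex_of_real (A $ i $ j) * v $ j))" by (rule norm_sum)
  also have "\<dots> = (\<Sum>j\<in>UNIV. A $ i $ j * cmod (v $ j))" by (simp add: norm_mult nonneg)
  also have "\<dots> \<le> (\<Sum>j\<in>UNIV. A $ i $ j) * m"
    unfolding sum_distrib_right by (intro sum_mono mult_left_mono m_ge nonneg)
  also have "\<dots> \<le> matrix_total A * m"
    unfolding matrix_total_def using m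
    by (intro mult_right_mono member_le_sum) (auto intro!: sum_nonneg nonneg)
  finally show ?thesis using m by simp
qed

text \<open>The characteristic polynomial, written out via the Leibniz formula, so that the eigenvalues
  are among the roots of a nonzero polynomial.\<close>
definition char_poly :: "real^'q^'q \<Rightarrow> complex poly" where
  "char_poly A = (\<Sum>p\<in>{p. p permutes (UNIV::'q set)}. of_int (sign p) *
      (\<Prod>i\<in>UNIV. [: cmat A $ i $ p i, (if p i = i then -1 else 0) :]))"

lemma poly_char_poly: "poly (char_poly A) l = det (\<chi> i j. cmat A $ i $ j - (if i = j then l else 0))"
  unfolding char_poly_def det_def
  by (auto simp: poly_sum poly_prod intro!: sum.cong arg_cong[where f="\<lambda>x. _ * x"] prod.cong)

lemma eigenvalue_iff_root:
  "(\<exists>v. v \<noteq> 0 \<and> cmat A *v v = l *s v) \<longleftrightarrow> poly (char_poly A) l = 0"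
proof -
  define D where "D = (\<chi> i j. cmat A $ i $ j - (if i = j then l else 0))"
  have "D *v v = cmat A *v v - l *s v" for v
    by (simp add: D_def vec_eq_iff matrix_vector_mult_def left_diff_distrib sum_subtractf
        if_distrib[where f="\<lambda>x. x * _"] cong: if_cong)
  then have "D *v v = 0 \<longleftrightarrow> cmat A *v v = l *s v" for v by simp
  moreover have "det D = 0 \<longleftrightarrow> (\<exists>v. v \<noteq> 0 \<and> D *v v = 0)"
    using det_nz_iff_inj_gen[of "(*v) D"] vec.inj_iff_eq_0[of D] by auto
  ultimately show ?thesis unfolding poly_char_poly D_def[symmetric] by simp
qed

text \<open>A nonnegative matrix has finitely many eigenvalues: the characteristic polynomial does not
  vanish at matrix_total A + 1, which exceeds every eigenvalue in modulus.\<close>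
lemma finite_eigenvalues:
  fixes A :: "real^'q^'q"
  assumes nonneg: "\<And>i j. 0 \<le> A $ i $ j"
  shows "finite {l. \<exists>v. v \<noteq> 0 \<and> cmat A *v v = l *s v}"
proof -
  have "poly (char_poly A) (of_real (matrix_total A + 1)) \<noteq> 0"
  proof
    assume "poly (char_poly A) (of_real (matrix_total A + 1)) = 0"
    then obtain v where "v \<noteq> 0" "cmat A *v v = of_real (matrix_total A + 1) *s v"
      unfolding eigenvalue_iff_root[symmetric] by blast
    from eigenvalue_le_matrix_total[OF nonneg this]
    have "\<bar>matrix_total A + 1\<bar> \<le> matrix_total A" by (simp only: norm_of_real)
    moreover have "0 \<le> matrix_total A" unfolding matrix_total_def using nonneg by (simp add: sum_nonneg)
    ultimately show False by simp
  qed
  then have "char_poly A \<noteq> 0" by auto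
  then show ?thesis unfolding eigenvalue_iff_root by (rule poly_roots_finite)
qed

lemma spec_rad_bounds:
  fixes A :: "real^'q^'q"
  assumes A: "positive_matrix A" and m: "\<And>j. m \<le> (\<Sum>i\<in>UNIV. A $ i $ j)"
  shows "m \<le> spec_rad A" "spec_rad A \<le> matrix_total A"
proof -
  have nonneg: "0 \<le> A $ i $ j" for i j using A unfolding positive_matrix_def by (auto intro: less_imp_le)
  define E where "E = {cmod l | l. \<exists>v::complex^'q. v \<noteq> 0 \<and> cmat A *v v = l *s v}"
  have E: "spec_rad A = Max E" unfolding spec_rad_def E_def ..
  have "E = cmod ` {l. \<exists>v. v \<noteq> 0 \<and> cmat A *v v = l *s v}" unfolding E_def by auto
  then have fin: "finite E" using finite_eigenvalues[OF nonneg] by simp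
  obtain x where x: "x \<in> Bbar" "A *v x = l1norm (A *v x) *\<^sub>R x" "0 < l1norm (A *v x)"
    using perron_vector[OF A] .
  define v where "v = (\<chi> i. complex_of_real (x $ i))"
  obtain i where "0 < x $ i" using Bbar_has_pos[OF x(1)] .
  then have "v $ i \<noteq> 0" unfolding v_def by simp
  then have "v \<noteq> 0" by auto
  moreover have "cmat A *v v = complex_of_real (l1norm (A *v x)) *s v"
  proof -
    have "(cmat A *v v) $ i = complex_of_real ((A *v x) $ i)" for i
      by (simp add: matrix_vector_mult_def cmat_def v_def)
    then show ?thesis using x(2) by (simp add: vec_eq_iff v_def)
  qed
  ultimately have in_E: "l1norm (A *v x) \<in> E"
    unfolding E_def using x(3) by (auto intro!: exI[of _ "complex_of_real (l1norm (A *v x))"])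
  have "l1norm (A *v x) = (A *v x) \<bullet> (\<chi> j. 1)"
    using positive_mult_Bbar_pos[OF A x(1)] by (simp add: l1norm_nonneg_eq less_imp_le inner_vec_def)
  also have "\<dots> = (\<chi> j. 1) \<bullet> (A *v x)" by (rule inner_commute)
  also have "\<dots> = ((\<chi> j. 1) v* A) \<bullet> x" by (rule dot_lmul_matrix[symmetric])
  also have "\<dots> = (transpose A *v (\<chi> j. 1)) \<bullet> x" by simp
  also have "m \<le> \<dots>"
    using m by (intro inner_Bbar_ge[OF x(1)]) (simp add: vector_matrix_mult_def)
  finally have "m \<le> l1norm (A *v x)" .
  then show "m \<le> spec_rad A"
    unfolding E using Max_ge[OF fin in_E] by linarith
  show "spec_rad A \<le> matrix_total A"
    unfolding E using fin in_E by (subst Max_le_iff) (auto simp: E_def intro: eigenvalue_le_matrix_total[OF nonneg])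
qed

lemma spectral_log_bound:
  fixes Q P :: "real^'q^'q"
  assumes Q: "row_allowable Q" and a: "0 < a"
    and Pa: "\<And>i j. a \<le> P $ i $ j" and Pb: "\<And>i j. P $ i $ j \<le> b"
  shows "\<bar>ln (spec_rad (Q ** P)) - ln (l1norm (transpose (Q ** P) *v (\<chi> i. 1 / real CARD('q))))\<bar>
           \<le> ln (real CARD('q) * b / a)"
proof -
  define q where "q = real CARD('q)"
  define A where "A = Q ** P"
  define v where "v = transpose A *v (\<chi> i. 1 / q)"
  obtain s where s: "0 < s" and lo: "\<And>j. a * s \<le> v $ j" and hi: "\<And>j. v $ j \<le> b * s"
    using transpose_product_comparable[OF Q Pa Pb uniform_in_Bbar] unfolding v_def A_def q_def by blast
  have q: "1 \<le> q" unfolding q_def by simp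
  have ab: "a \<le> b" using Pa Pb order_trans by blast
  have as: "0 < a * s" using a s by simp
  have A: "positive_matrix A" unfolding A_def
    using Pa a by (intro row_allowable_times_positive[OF Q]) (auto simp: positive_matrix_def intro: less_le_trans)
  have col: "(\<Sum>i\<in>UNIV. A $ i $ j) = q * v $ j" for j
    using q unfolding v_def matrix_vector_mult_def transpose_def by (simp flip: sum_divide_distrib)
  have L: "q * (a * s) \<le> l1norm v" "l1norm v \<le> q * (b * s)"
    using l1norm_bounds[OF _ lo hi] as unfolding q_def by auto
  have total: "matrix_total A = q * l1norm v"
  proof -
    have "matrix_total A = (\<Sum>j\<in>UNIV. \<Sum>i\<in>UNIV. A $ i $ j)" unfolding matrix_total_def by (rule sum.swap)
    also have "\<dots> = q * (\<Sum>j\<in>UNIV. v $ j)" by (simp add: col sum_distrib_left)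
    also have "\<dots> = q * l1norm v" using lo as by (subst l1norm_nonneg_eq) (auto intro: order_trans less_imp_le)
    finally show ?thesis .
  qed
  have rho: "q * (a * s) \<le> spec_rad A" "spec_rad A \<le> q * l1norm v"
    using spec_rad_bounds[OF A, of "q * (a * s)"] lo q unfolding col total by auto
  define K where "K = q * b / a"
  have qK: "q \<le> K" unfolding K_def using a ab q by (simp add: field_simps mult_left_mono)
  have "\<bar>ln (spec_rad A) - ln (l1norm v)\<bar> \<le> ln K"
  proof (rule abs_ln_diff_le)
    have "0 < q * (a * s)" using as q by simp
    then show "0 < spec_rad A" "0 < l1norm v" using rho L by linarith+
    show "spec_rad A \<le> K * l1norm v"
      using rho qK \<open>0 < l1norm v\<close> mult_right_mono[of q K "l1norm v"] by linarith
    have "l1norm v \<le> K * (a * s)" using L a unfolding K_def by simp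
    also have "\<dots> \<le> K * (q * (a * s))"
      using mult_right_mono[OF q, of "a * s"] as qK q by (intro mult_left_mono) auto
    also have "\<dots> \<le> K * spec_rad A" using rho qK q by (intro mult_left_mono) auto
    finally show "l1norm v \<le> K * spec_rad A" .
  qed
  then show ?thesis unfolding K_def q_def v_def A_def .
qed

lemma hitT_finite_iff: "hitT X \<omega> < \<infinity> \<longleftrightarrow> (\<exists>n\<ge>1. inS_pos (Xprod X n \<omega>))"
  unfolding hitT_def by auto

lemma hitT_finiteE:
  assumes "hitT X \<omega> < \<infinity>"
  obtains T where "hitT X \<omega> = enat T" "1 \<le> T" "positive_matrix (Xprod X T \<omega>)"
proof -
  have ex: "\<exists>n. 1 \<le> n \<and> inS_pos (Xprod X n \<omega>)" using assms unfolding hitT_finite_iff by blast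
  define T where "T = (LEAST n. 1 \<le> n \<and> inS_pos (Xprod X n \<omega>))"
  have "hitT X \<omega> = enat T" unfolding hitT_def T_def using ex by simp
  moreover have "1 \<le> T \<and> inS_pos (Xprod X T \<omega>)" using LeastI_ex[OF ex] unfolding T_def .
  ultimately show ?thesis using that inS_pos_iff_positive by blast
qed

lemma Xprod_after:
  assumes "\<And>n. 1 \<le> n \<Longrightarrow> inS (X n \<omega>)" and "T \<le> n"
  obtains Q where "row_allowable Q" "Xprod X n \<omega> = Q ** Xprod X T \<omega>"
proof
  show "row_allowable (block_prod (\<lambda>i. X i \<omega>) T (n - T))"
    by (rule block_prod_allowable) (rule assms(1))
  show "Xprod X n \<omega> = block_prod (\<lambda>i. X i \<omega>) T (n - T) ** Xprod X T \<omega>"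
    using Xprod_split[of X T "n - T" \<omega>] assms(2) by simp
qed

lemma Xprod_row_allowable:
  assumes "\<And>n. 1 \<le> n \<Longrightarrow> inS (X n \<omega>)"
  shows "row_allowable (Xprod X n \<omega>)"
  unfolding Xprod_eq_block_prod by (rule block_prod_allowable) (rule assms)

lemma uniform_bound_from_tail:
  fixes f :: "nat \<Rightarrow> 'z \<Rightarrow> real"
  assumes tail: "\<And>n z. T \<le> n \<Longrightarrow> z \<in> Z \<Longrightarrow> f n z \<le> C"
    and head: "\<And>n. n < T \<Longrightarrow> \<exists>c. \<forall>z\<in>Z. f n z \<le> c"
  shows "\<exists>C. \<forall>n. \<forall>z\<in>Z. f n z \<le> C"
proof -
  have "\<forall>n\<in>{..<T}. \<exists>c. \<forall>z\<in>Z. f n z \<le> c" using head by blast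
  then have "\<exists>c. \<forall>n\<in>{..<T}. \<forall>z\<in>Z. f n z \<le> c n" by (rule bchoice)
  then obtain c where c: "\<And>n z. n < T \<Longrightarrow> z \<in> Z \<Longrightarrow> f n z \<le> c n" by blast
  define B where "B = Max (insert C (c ` {..<T}))"
  have "C \<le> B" "\<And>n. n < T \<Longrightarrow> c n \<le> B" unfolding B_def by (auto intro: Max_ge)
  then have "f n z \<le> B" if "z \<in> Z" for n z
    using tail[OF _ that, of n] c[OF _ that, of n] by (meson not_le order_trans)
  then show ?thesis by blast
qed

lemma positive_after_hit:
  assumes "\<And>n. 1 \<le> n \<Longrightarrow> inS (X n \<omega>)" and "hitT X \<omega> < \<infinity>"
  shows "\<forall>n. enat n \<ge> hitT X \<omega> \<longrightarrow> inS_pos (Xprod X n \<omega>)"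
proof (intro allI impI)
  fix n assume n: "hitT X \<omega> \<le> enat n"
  obtain T where T: "hitT X \<omega> = enat T" "positive_matrix (Xprod X T \<omega>)"
    using hitT_finiteE[OF assms(2)] by blast
  have "T \<le> n" using n T(1) by simp
  then obtain Q where "row_allowable Q" "Xprod X n \<omega> = Q ** Xprod X T \<omega>"
    using Xprod_after[of X \<omega>, OF assms(1)] by blast
  then show "inS_pos (Xprod X n \<omega>)"
    unfolding inS_pos_iff_positive using row_allowable_times_positive T(2) by simp
qed

text \<open>Claim (ii): apply the single-product estimate with P = X^(T) for n >= T; before T the
  indicator vanishes and the row-sum bound of X^(n) is used.\<close>
lemma bilinear_bound_pathwise:
  fixes X :: "nat \<Rightarrow> 'a \<Rightarrow> real^'q^'q"
  assumes S: "\<And>n. 1 \<le> n \<Longrightarrow> inS (X n \<omega>)" and fin: "hitT X \<omega> < \<infinity>"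
  shows "\<exists>C. \<forall>n\<ge>1. \<forall>x\<in>Bbar. \<forall>y\<in>Bbar.
    \<bar>(if hitT X \<omega> \<le> enat n then ln (y \<bullet> (Xprod X n \<omega> *v x)) else 0)
      - ln (l1norm (Yprod X n \<omega> *v y))\<bar> \<le> C"
proof -
  obtain T where T: "hitT X \<omega> = enat T" "positive_matrix (Xprod X T \<omega>)"
    using hitT_finiteE[OF fin] by blast
  obtain a b where a: "0 < a" and Pa: "\<And>i j. a \<le> Xprod X T \<omega> $ i $ j"
    and Pb: "\<And>i j. Xprod X T \<omega> $ i $ j \<le> b"
    using positive_matrix_entry_bounds[OF T(2)] by blast
  define f where "f n z = \<bar>(if T \<le> n then ln (snd z \<bullet> (Xprod X n \<omega> *v fst z)) else 0)
      - ln (l1norm (Yprod X n \<omega> *v snd z))\<bar>" for n and z :: "(real^'q) \<times> (real^'q)"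
  have "\<exists>C. \<forall>n. \<forall>z\<in>Bbar \<times> Bbar. f n z \<le> C"
  proof (rule uniform_bound_from_tail)
    fix n and z :: "(real^'q) \<times> (real^'q)"
    assume n: "T \<le> n" and z: "z \<in> Bbar \<times> Bbar"
    obtain Q where Q: "row_allowable Q" and eq: "Xprod X n \<omega> = Q ** Xprod X T \<omega>"
      using Xprod_after[of X \<omega>, OF S n] by blast
    obtain x y where xy: "z = (x, y)" "x \<in> Bbar" "y \<in> Bbar" using z by auto
    show "f n z \<le> ln (real CARD('q) * b / a)"
      unfolding f_def Yprod_def xy(1) fst_conv snd_conv if_P[OF n] eq
      by (rule bilinear_log_bound[OF Q a Pa Pb xy(2,3)])
  next
    fix n assume n: "n < T"
    obtain c where c: "\<forall>y\<in>Bbar. \<bar>ln (l1norm (transpose (Xprod X n \<omega>) *v y))\<bar> \<le> c"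
      using row_allowable_log_bound[OF Xprod_row_allowable[of X \<omega>, OF S]] by blast
    have "f n z \<le> c" if "z \<in> Bbar \<times> Bbar" for z
      using c that n unfolding f_def Yprod_def by (cases z) simp
    then show "\<exists>c. \<forall>z\<in>Bbar \<times> Bbar. f n z \<le> c" by blast
  qed
  then obtain C where C: "\<And>n z. z \<in> Bbar \<times> Bbar \<Longrightarrow> f n z \<le> C" by blast
  show ?thesis
  proof (intro exI allI impI ballI)
    fix n and x y :: "real^'q" assume "x \<in> Bbar" "y \<in> Bbar"
    then have "f n (x, y) \<le> C" by (intro C) simp
    then show "\<bar>(if hitT X \<omega> \<le> enat n then ln (y \<bullet> (Xprod X n \<omega> *v x)) else 0)
      - ln (l1norm (Yprod X n \<omega> *v y))\<bar> \<le> C"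
      by (simp add: f_def T(1) split: if_splits)
  qed
qed

lemma spectral_bound_pathwise:
  fixes X :: "nat \<Rightarrow> 'a \<Rightarrow> real^'q^'q"
  assumes S: "\<And>n. 1 \<le> n \<Longrightarrow> inS (X n \<omega>)" and fin: "hitT X \<omega> < \<infinity>"
  shows "\<exists>C. \<forall>n\<ge>1. \<bar>ln (spec_rad (Xprod X n \<omega>))
    - ln (l1norm (Yprod X n \<omega> *v (\<chi> i. 1 / real CARD('q))))\<bar> \<le> C"
proof -
  obtain T where T: "hitT X \<omega> = enat T" "positive_matrix (Xprod X T \<omega>)"
    using hitT_finiteE[OF fin] by blast
  obtain a b where a: "0 < a" and Pa: "\<And>i j. a \<le> Xprod X T \<omega> $ i $ j"
    and Pb: "\<And>i j. Xprod X T \<omega> $ i $ j \<le> b"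
    using positive_matrix_entry_bounds[OF T(2)] by blast
  define f where "f n z = \<bar>ln (spec_rad (Xprod X n \<omega>))
    - ln (l1norm (Yprod X n \<omega> *v (\<chi> i. 1 / real CARD('q))))\<bar>" for n and z :: unit
  have "\<exists>C. \<forall>n. \<forall>z\<in>UNIV. f n z \<le> C"
  proof (rule uniform_bound_from_tail)
    fix n z assume n: "T \<le> n"
    obtain Q where Q: "row_allowable Q" and eq: "Xprod X n \<omega> = Q ** Xprod X T \<omega>"
      using Xprod_after[of X \<omega>, OF S n] by blast
    show "f n z \<le> ln (real CARD('q) * b / a)"
      unfolding f_def Yprod_def eq by (rule spectral_log_bound[OF Q a Pa Pb])
  qed (auto simp: f_def)
  then show ?thesis unfolding f_def by blast
qed

lemma borel_measurable_matrix_mult: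
  fixes f g :: "'b \<Rightarrow> real^'q^'q"
  assumes "f \<in> borel_measurable N" "g \<in> borel_measurable N"
  shows "(\<lambda>x. f x ** g x) \<in> borel_measurable N"
proof -
  have "continuous_on UNIV (\<lambda>p::(real^'q^'q) \<times> (real^'q^'q). fst p ** snd p)"
    unfolding matrix_matrix_mult_def by (intro continuous_on_vec_lambda continuous_intros)
  then show ?thesis by (rule borel_measurable_continuous_Pair[OF assms])
qed

lemma block_prod_measurable:
  assumes "\<And>i. a < i \<Longrightarrow> i \<le> a + d \<Longrightarrow> i \<in> K"
  shows "(\<lambda>f. block_prod f a d) \<in> borel_measurable (PiM K (\<lambda>_. (borel :: (real^'q^'q) measure)))"
  using assms
  by (induction d) (auto intro!: borel_measurable_matrix_mult measurable_component_singleton)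

lemma positive_matrix_borel: "{A :: real^'q^'q. positive_matrix A} \<in> sets borel"
proof -
  have "open {r :: real^'q. \<forall>j. r $ j \<in> {0<..}}" by (rule open_vector_box) auto
  then have "open {A :: real^'q^'q. \<forall>i. A $ i \<in> {r. \<forall>j. r $ j \<in> {0<..}}}"
    by (intro open_vector_box) auto
  then show ?thesis unfolding positive_matrix_def by simp
qed

lemma (in prob_space) prob_union_pos_imp_pos:
  fixes E :: "nat \<Rightarrow> 'a set"
  assumes "\<And>n. E n \<in> events" and "0 < prob (\<Union>n. E n)"
  obtains n where "0 < prob (E n)"
proof (rule ccontr)
  assume "\<not> thesis"
  then have "\<not> 0 < prob (E n)" for n using that by blast
  then have "prob (E n) = 0" for n using measure_nonneg[of M "E n"] by (meson not_less order_antisym)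
  then have "emeasure M (E n) = 0" for n by (simp add: emeasure_eq_measure)
  then have "emeasure M (\<Union>n. E n) = 0" using assms(1) by (intro emeasure_UN_eq_0) auto
  then show False using assms(2) by (simp add: measure_def)
qed

lemma le_geometric_imp_zero:
  fixes x p :: real
  assumes "0 \<le> x" "0 < p" "p \<le> 1" and bound: "\<And>m. x \<le> (1 - p) ^ m"
  shows "x = 0"
proof -
  have "(\<lambda>m. (1 - p) ^ m) \<longlonglongrightarrow> 0" using assms by (intro LIMSEQ_power_zero) simp
  then have "x \<le> 0" using bound by (intro tendsto_le[OF trivial_limit_sequentially _ tendsto_const]) auto
  with assms(1) show ?thesis by simp
qed

text \<open>A positive block X_{a+d} \<dots> X_{a+1} makes the whole product X^(a+d) positive, because the
  remaining factor X^(a) is column-allowable.\<close>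
lemma positive_block_imp_positive_product:
  assumes "\<And>n. 1 \<le> n \<Longrightarrow> inS (X n \<omega>)" and "positive_matrix (block_prod (\<lambda>i. X i \<omega>) a d)"
  shows "positive_matrix (Xprod X (a + d) \<omega>)"
  unfolding Xprod_split Xprod_eq_block_prod[of X a]
  by (intro positive_times_column_allowable assms(2) block_prod_allowable assms(1))

locale iid_matrices = prob_space M for M :: "'a measure" +
  fixes X :: "nat \<Rightarrow> 'a \<Rightarrow> real^'q^'q"
  assumes random_X: "\<And>n. 1 \<le> n \<Longrightarrow> X n \<in> borel_measurable M"
    and indep_X: "indep_vars (\<lambda>_. borel) X {1..}"
    and ident_X: "\<And>n. 1 \<le> n \<Longrightarrow> distr M borel (X n) = distr M borel (X 1)"
begin

lemma block_measurable: "(\<lambda>\<omega>. block_prod (\<lambda>i. X i \<omega>) a d) \<in> borel_measurable M"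
  by (induction d) (auto intro!: borel_measurable_matrix_mult random_X)

lemma indep_blocks: "indep_vars (\<lambda>_. borel) (\<lambda>k \<omega>. block_prod (\<lambda>i. X i \<omega>) (k * N) N) UNIV"
proof -
  define K where "K k = {k * N <.. k * N + N}" for k
  have "K k \<inter> K l = {}" if "k < l" for k l
  proof -
    have "Suc k * N \<le> l * N" using that by (intro mult_le_mono1) simp
    then show ?thesis unfolding K_def by auto
  qed
  then have disj: "disjoint_family_on K UNIV"
    unfolding disjoint_family_on_def by (metis Int_commute linorder_neq_iff)
  have "indep_vars (\<lambda>k. PiM (K k) (\<lambda>_. borel)) (\<lambda>k \<omega>. restrict (\<lambda>i. X i \<omega>) (K k)) UNIV"
    by (rule indep_vars_restrict[OF indep_X _ disj]) (auto simp: K_def)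
  then have "indep_vars (\<lambda>_. borel) (\<lambda>k \<omega>. block_prod (restrict (\<lambda>i. X i \<omega>) (K k)) (k * N) N) UNIV"
    by (rule indep_vars_compose2) (rule block_prod_measurable, simp add: K_def)
  moreover have "block_prod (restrict (\<lambda>i. X i \<omega>) (K k)) (k * N) N = block_prod (\<lambda>i. X i \<omega>) (k * N) N"
    for k \<omega> by (rule block_prod_cong) (simp add: K_def)
  ultimately show ?thesis by simp
qed

lemma distr_restrict_X:
  assumes "K \<noteq> {}" "K \<subseteq> {1..}"
  shows "distr M (PiM K (\<lambda>_. borel)) (\<lambda>\<omega>. restrict (\<lambda>i. X i \<omega>) K) = PiM K (\<lambda>_. distr M borel (X 1))"
proof -
  have rv: "\<And>i. i \<in> K \<Longrightarrow> random_variable borel (X i)" using assms(2) random_X by auto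
  have "indep_vars (\<lambda>_. borel) X K" using indep_vars_subset[OF indep_X assms(2)] .
  then have "distr M (PiM K (\<lambda>_. borel)) (\<lambda>\<omega>. restrict (\<lambda>i. X i \<omega>) K) = PiM K (\<lambda>i. distr M borel (X i))"
    using indep_vars_iff_distr_eq_PiM'[OF assms(1) rv] by simp
  also have "\<dots> = PiM K (\<lambda>_. distr M borel (X 1))"
    using assms(2) by (intro PiM_cong refl ident_X) auto
  finally show ?thesis .
qed

lemma distr_block:
  assumes "1 \<le> N"
  shows "distr M borel (\<lambda>\<omega>. block_prod (\<lambda>i. X i \<omega>) a N)
    = distr (PiM {0<..N} (\<lambda>_. distr M borel (X 1))) borel (\<lambda>f. block_prod f 0 N)"
proof -
  let ?D = "distr M borel (X 1)"
  define K where "K = {a<..a+N}"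
  define R where "R \<omega> = restrict (\<lambda>i. X i \<omega>) K" for \<omega>
  define g where "g f = block_prod f a N" for f :: "nat \<Rightarrow> real^'q^'q"
  define s where "s f = (\<lambda>n\<in>{0<..N}. f (n + a))" for f :: "nat \<Rightarrow> real^'q^'q"
  have D: "prob_space ?D" by (rule prob_space_distr) (rule random_X, simp)
  have R: "R \<in> measurable M (PiM K (\<lambda>_. borel))"
    unfolding R_def using random_X by (auto simp: K_def intro!: measurable_restrict)
  have g: "g \<in> borel_measurable (PiM K (\<lambda>_. borel))"
    unfolding g_def by (rule block_prod_measurable) (auto simp: K_def)
  have s: "s \<in> measurable (PiM K (\<lambda>_. ?D)) (PiM {0<..N} (\<lambda>_. ?D))"
    unfolding s_def by (intro measurable_restrict measurable_component_singleton) (auto simp: K_def)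
  have block0: "(\<lambda>f. block_prod f 0 N) \<in> borel_measurable (PiM {0<..N} (\<lambda>_. ?D))"
  proof -
    have "sets (PiM {0<..N} (\<lambda>_. ?D)) = sets (PiM {0<..N} (\<lambda>_. borel))" by (rule sets_PiM_cong) auto
    note cong = measurable_cong_sets[OF this refl]
    show ?thesis unfolding cong by (rule block_prod_measurable) simp
  qed
  have "distr M borel (\<lambda>\<omega>. block_prod (\<lambda>i. X i \<omega>) a N) = distr M borel (g \<circ> R)"
    by (rule distr_cong) (auto simp: g_def R_def K_def intro!: block_prod_cong)
  also have "\<dots> = distr (distr M (PiM K (\<lambda>_. borel)) R) borel g" by (rule distr_distr[symmetric, OF g R])
  also have "distr M (PiM K (\<lambda>_. borel)) R = PiM K (\<lambda>_. ?D)"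
    unfolding R_def using assms by (intro distr_restrict_X) (auto simp: K_def)
  also have "distr (PiM K (\<lambda>_. ?D)) borel g = distr (PiM K (\<lambda>_. ?D)) borel ((\<lambda>f. block_prod f 0 N) \<circ> s)"
    by (rule distr_cong) (auto simp: g_def s_def block_prod_shift[of _ a] intro!: block_prod_cong)
  also have "\<dots> = distr (distr (PiM K (\<lambda>_. ?D)) (PiM {0<..N} (\<lambda>_. ?D)) s) borel (\<lambda>f. block_prod f 0 N)"
    by (rule distr_distr[symmetric, OF block0 s])
  also have "distr (PiM K (\<lambda>_. ?D)) (PiM {0<..N} (\<lambda>_. ?D)) s = PiM {0<..N} (\<lambda>_. ?D)"
    unfolding s_def K_def
    using distr_PiM_reindex[of "{a<..a+N}" "\<lambda>_. ?D" "\<lambda>n. n + a" "{0<..N}"] D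
    by (simp add: inj_on_def)
  finally show ?thesis .
qed

lemma positive_product_event: "{\<omega>\<in>space M. positive_matrix (Xprod X n \<omega>)} \<in> events"
  using measurable_sets[OF block_measurable positive_matrix_borel, of 0 n]
  by (simp add: Xprod_eq_block_prod vimage_def Int_def conj_commute)

lemma prob_block_not_positive:
  assumes "1 \<le> N"
  shows "prob {\<omega>\<in>space M. \<not> positive_matrix (block_prod (\<lambda>i. X i \<omega>) a N)}
    = 1 - prob {\<omega>\<in>space M. positive_matrix (Xprod X N \<omega>)}"
proof -
  define G where "G = - {A :: real^'q^'q. positive_matrix A}"
  have G: "G \<in> sets borel" unfolding G_def using positive_matrix_borel by (rule borel_comp)
  have "prob {\<omega>\<in>space M. \<not> positive_matrix (block_prod (\<lambda>i. X i \<omega>) a N)}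
      = measure (distr M borel (\<lambda>\<omega>. block_prod (\<lambda>i. X i \<omega>) a N)) G"
    by (subst measure_distr[OF block_measurable G]) (auto simp: G_def intro: arg_cong[where f=prob])
  also have "\<dots> = measure (distr M borel (\<lambda>\<omega>. block_prod (\<lambda>i. X i \<omega>) 0 N)) G"
    unfolding distr_block[OF assms] ..
  also have "\<dots> = prob (space M - {\<omega>\<in>space M. positive_matrix (Xprod X N \<omega>)})"
    by (subst measure_distr[OF block_measurable G])
      (auto simp: G_def Xprod_eq_block_prod intro: arg_cong[where f=prob])
  also have "\<dots> = 1 - prob {\<omega>\<in>space M. positive_matrix (Xprod X N \<omega>)}"
    using positive_product_event by (rule prob_compl)
  finally show ?thesis .
qed

text \<open>If no product X^(n) is positive, then none of the first m blocks of length N is positive;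
  these are independent events, each of probability 1 - P[X^(N) positive].\<close>
lemma prob_never_positive_le:
  assumes S: "\<And>n \<omega>. 1 \<le> n \<Longrightarrow> \<omega> \<in> space M \<Longrightarrow> inS (X n \<omega>)" and N: "1 \<le> N"
  shows "prob {\<omega>\<in>space M. \<forall>n\<ge>1. \<not> positive_matrix (Xprod X n \<omega>)}
    \<le> (1 - prob {\<omega>\<in>space M. positive_matrix (Xprod X N \<omega>)}) ^ m"
  (is "prob ?never \<le> (1 - ?p) ^ m")
proof -
  define F where "F k = {\<omega>\<in>space M. \<not> positive_matrix (block_prod (\<lambda>i. X i \<omega>) (k * N) N)}" for k
  have F: "F k = (\<lambda>\<omega>. block_prod (\<lambda>i. X i \<omega>) (k * N) N) -` (- {A. positive_matrix A}) \<inter> space M" for k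
    unfolding F_def by auto
  have "?never \<subseteq> (\<Inter>k\<in>{..<Suc m}. F k)"
  proof (intro subsetI INT_I)
    fix \<omega> k assume \<omega>: "\<omega> \<in> ?never"
    show "\<omega> \<in> F k"
    proof (rule ccontr)
      assume "\<omega> \<notin> F k"
      moreover have "\<And>n. 1 \<le> n \<Longrightarrow> inS (X n \<omega>)" using S \<omega> by blast
      ultimately have "positive_matrix (Xprod X (k * N + N) \<omega>)"
        using \<omega> by (intro positive_block_imp_positive_product) (auto simp: F_def)
      then show False using \<omega> N by auto
    qed
  qed
  moreover have "F k \<in> events" for k
    unfolding F by (rule measurable_sets[OF block_measurable borel_comp[OF positive_matrix_borel]])
  ultimately have "prob ?never \<le> prob (\<Inter>k\<in>{..<Suc m}. F k)"
    by (intro finite_measure_mono sets.finite_INT) auto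
  also have "\<dots> = (\<Prod>k\<in>{..<Suc m}. prob (F k))"
    unfolding F by (rule indep_varsD[OF indep_blocks]) (auto intro: borel_comp positive_matrix_borel)
  also have "\<dots> = (1 - ?p) ^ Suc m" unfolding F_def prob_block_not_positive[OF N] by simp
  also have "\<dots> \<le> (1 - ?p) ^ m" by (intro power_decreasing) auto
  finally show ?thesis .
qed

lemma hitting_almost_sure:
  assumes S: "\<And>n \<omega>. 1 \<le> n \<Longrightarrow> \<omega> \<in> space M \<Longrightarrow> inS (X n \<omega>)"
    and pos: "0 < prob {\<omega>\<in>space M. \<exists>n\<ge>1. inS_pos (Xprod X n \<omega>)}"
  shows "prob {\<omega>\<in>space M. \<exists>n\<ge>1. inS_pos (Xprod X n \<omega>)} = 1"
proof -
  define A where "A = {\<omega>\<in>space M. \<exists>n\<ge>1. inS_pos (Xprod X n \<omega>)}"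
  define E where "E n = {\<omega>\<in>space M. positive_matrix (Xprod X (Suc n) \<omega>)}" for n
  have A_eq: "A = (\<Union>n. E n)"
    unfolding A_def E_def inS_pos_iff_positive by (auto simp del: Xprod.simps dest: Suc_le_D)
  have A: "A \<in> events" unfolding A_eq E_def using positive_product_event by blast
  obtain n where n: "0 < prob (E n)"
    using prob_union_pos_imp_pos[of E] positive_product_event pos
    unfolding A_def[symmetric] A_eq E_def by blast
  have "space M - A = {\<omega>\<in>space M. \<forall>n\<ge>1. \<not> positive_matrix (Xprod X n \<omega>)}"
    unfolding A_def inS_pos_iff_positive by auto
  then have "prob (space M - A) \<le> (1 - prob (E n)) ^ m" for m
    unfolding E_def using prob_never_positive_le[OF S, of "Suc n" m] by simp
  then have "prob (space M - A) = 0" using n by (intro le_geometric_imp_zero) auto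
  then show ?thesis using prob_compl[OF A] unfolding A_def by simp
qed

end

theorem mainTheorem2:
  fixes M :: "'a measure" and X :: "nat \<Rightarrow> 'a \<Rightarrow> real^'q^'q"
  assumes "prob_space M"
    and "\<And>n. n \<ge> 1 \<Longrightarrow> X n \<in> borel_measurable M"
    and "prob_space.indep_vars M (\<lambda>_. borel) X {1..}"
    and "\<And>n. n \<ge> 1 \<Longrightarrow> distr M borel (X n) = distr M borel (X 1)"
    and "\<And>n \<omega>. n \<ge> 1 \<Longrightarrow> \<omega> \<in> space M \<Longrightarrow> inS (X n \<omega>)"
  shows "(measure M {\<omega>\<in>space M. \<exists>n\<ge>1. inS_pos (Xprod X n \<omega>)} > 0
            \<longleftrightarrow> measure M {\<omega>\<in>space M. hitT X \<omega> < \<infinity>} = 1)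
     \<and> (\<forall>\<omega>\<in>space M. hitT X \<omega> < \<infinity> \<longrightarrow>
          (\<forall>n. enat n \<ge> hitT X \<omega> \<longrightarrow> inS_pos (Xprod X n \<omega>))
        \<and> (\<exists>C. \<forall>n\<ge>1. \<forall>x\<in>Bbar. \<forall>y\<in>Bbar.
              \<bar>(if hitT X \<omega> \<le> enat n then ln (y \<bullet> (Xprod X n \<omega> *v x)) else 0)
                - ln (l1norm (Yprod X n \<omega> *v y))\<bar> \<le> C)
        \<and> (\<exists>C. \<forall>n\<ge>1.
              \<bar>ln (spec_rad (Xprod X n \<omega>))
                - ln (l1norm (Yprod X n \<omega> *v (\<chi> i. 1 / real CARD('q))))\<bar> \<le> C))"
proof -
  interpret iid_matrices M X
    by (intro iid_matrices.intro iid_matrices_axioms.intro assms(1-4))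
  have hit_event: "{\<omega>\<in>space M. hitT X \<omega> < \<infinity>} = {\<omega>\<in>space M. \<exists>n\<ge>1. inS_pos (Xprod X n \<omega>)}"
    by (simp only: hitT_finite_iff)
  have zero_one: "0 < prob {\<omega>\<in>space M. \<exists>n\<ge>1. inS_pos (Xprod X n \<omega>)}
      \<longleftrightarrow> prob {\<omega>\<in>space M. hitT X \<omega> < \<infinity>} = 1"
    unfolding hit_event by (intro iffI hitting_almost_sure[OF assms(5)]) simp_all
  show ?thesis
    by (intro conjI ballI impI zero_one positive_after_hit bilinear_bound_pathwise
        spectral_bound_pathwise) (auto intro: assms(5))
qed

end
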